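(* Let $\mathcal C$ be a category all of whose morphisms are monomorphisms and which has binary joins of subobjects, and let $\perp$ be an independence relation on $\mathcal C$ satisfying invariance, monotonicity, transitivity, symmetry, existence, base monotonicity and $3$-amalgamation. Then $\perp$ satisfies strong $3$-amalgamation.
   Context: A commuting square consists of objects $C,A,B,M$ and morphisms $C\to A$, $C\to B$, $A\to M$, $B\to M$ with equal composites $C\to M$. An independence relation $\perp$ is a class of commuting squares (called independent); write $A\perp^M_C B$. Properties (all diagrams commute): Invariance: for a square $C\to A,C\to B,A\to M,B\to M$ and any $M\to N$, $A\perp^M_C B$ iff the square with $A\to M\to N$, $B\to M\to N$ is independent. Monotonicity: if $A\perp^M_C B$ and $C\to B$ factors as $C\to B'\to B$, then the square $C\to A$, $C\to B'$, $A\to M$, $B'\to B\to M$ is independent. Transitivity: if $(C\to A,C\to B,A\to M,B\to M)$ and $(B\to M,B\to D,M\to N,D\to N)$ are independent then so is $(C\to A, C\to B\to D, A\to M\to N, D\to N)$. Symmetry: $A\perp^M_C B$ iff $B\perp^M_C A$. Existence: every span $A\leftarrow C\to B$ can be completed to an independent square. Base monotonicity: if $A\perp^M_C D$ and $C\to D$ factors as $C\to B\to D$, then there are $A',N$ and morphisms $A\to A'$, $B\to A'$, $A'\to N$, $M\to N$ making everything commute such that the square $B\to A'$, $B\to D$, $A'\to N$, $D\to M\to N$ is independent. A horn consists of morphisms $M\to A$, $M\to B$, $M\to C$, $A\to N_1$, $B\to N_1$, $A\to N_2$, $C\to N_2$, $B\to N_3$, $C\to N_3$ with the three squares (tops $N_1,N_2,N_3$)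 commuting; it is independent if these three squares are. $3$-amalgamation: for every independent horn there are $N$ and $N_i\to N$ ($i=1,2,3$) making the cube commute and with $A\perp^N_M N_3$ (square $M\to A$, $M\to N_3$, $A\to N$, $N_3\to N$). Strong $3$-amalgamation: for every independent horn there are $N$ and $N_i\to N$ making the cube commute and such that all six faces of the cube are independent. Binary joins of subobjects: any two subobjects of an object have a least upper bound among subobjects. *)

theory Defs
  imports Main
begin

record ('o, 'm) cat =
  Obj  :: "'o set"
  Mor  :: "'m set"
  Dom  :: "'m \<Rightarrow> 'o"
  Cod  :: "'m \<Rightarrow> 'o"
  Comp :: "'m \<Rightarrow> 'm \<Rightarrow> 'm"   (* Comp C g f = g \<circ> f, defined when Cod f = Dom g *)
  Ident :: "'o \<Rightarrow> 'm"

definition category :: "('o, 'm) cat \<Rightarrow> bool" where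
  "category C \<longleftrightarrow>
     (\<forall>f\<in>Mor C. Dom C f \<in> Obj C \<and> Cod C f \<in> Obj C)
   \<and> (\<forall>A\<in>Obj C. Ident C A \<in> Mor C \<and> Dom C (Ident C A) = A \<and> Cod C (Ident C A) = A)
   \<and> (\<forall>f\<in>Mor C. \<forall>g\<in>Mor C. Cod C f = Dom C g \<longrightarrow>
        Comp C g f \<in> Mor C \<and> Dom C (Comp C g f) = Dom C f \<and> Cod C (Comp C g f) = Cod C g)
   \<and> (\<forall>f\<in>Mor C. Comp C (Ident C (Cod C f)) f = f \<and> Comp C f (Ident C (Dom C f)) = f)
   \<and> (\<forall>f\<in>Mor C. \<forall>g\<in>Mor C. \<forall>h\<in>Mor C. Cod C f = Dom C g \<and> Cod C g = Dom C h \<longrightarrow>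
        Comp C h (Comp C g f) = Comp C (Comp C h g) f)"

definition mono :: "('o, 'm) cat \<Rightarrow> 'm \<Rightarrow> bool" where
  "mono C f \<longleftrightarrow> f \<in> Mor C \<and>
     (\<forall>g\<in>Mor C. \<forall>h\<in>Mor C. Dom C g = Dom C h \<and> Cod C g = Dom C f \<and> Cod C h = Dom C f
        \<and> Comp C f g = Comp C f h \<longrightarrow> g = h)"

definition all_mono :: "('o, 'm) cat \<Rightarrow> bool" where
  "all_mono C \<longleftrightarrow> (\<forall>f\<in>Mor C. mono C f)"

text \<open>Order on subobjects (represented by monomorphisms into a fixed object):
  m factors through n.\<close>
definition factors_through :: "('o, 'm) cat \<Rightarrow> 'm \<Rightarrow> 'm \<Rightarrow> bool" where
  "factors_through C m n \<longleftrightarrow> Cod C m = Cod C n \<and>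
     (\<exists>k\<in>Mor C. Dom C k = Dom C m \<and> Cod C k = Dom C n \<and> Comp C n k = m)"

definition has_binary_joins :: "('o, 'm) cat \<Rightarrow> bool" where
  "has_binary_joins C \<longleftrightarrow>
     (\<forall>m1 m2. mono C m1 \<and> mono C m2 \<and> Cod C m1 = Cod C m2 \<longrightarrow>
        (\<exists>j. mono C j \<and> Cod C j = Cod C m1 \<and> factors_through C m1 j \<and> factors_through C m2 j \<and>
           (\<forall>n. mono C n \<and> Cod C n = Cod C m1 \<and> factors_through C m1 n \<and> factors_through C m2 n
                 \<longrightarrow> factors_through C j n)))"

text \<open>Square (f: C\<rightarrow>A, g: C\<rightarrow>B, h: A\<rightarrow>M, k: B\<rightarrow>M) with h\<circ>f = k\<circ>g.
  A predicate Ind on such quadruples is read as A \<perp>^M_C B.\<close>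
definition comm_square :: "('o, 'm) cat \<Rightarrow> 'm \<Rightarrow> 'm \<Rightarrow> 'm \<Rightarrow> 'm \<Rightarrow> bool" where
  "comm_square C f g h k \<longleftrightarrow> f \<in> Mor C \<and> g \<in> Mor C \<and> h \<in> Mor C \<and> k \<in> Mor C \<and>
     Dom C f = Dom C g \<and> Cod C f = Dom C h \<and> Cod C g = Dom C k \<and> Cod C h = Cod C k \<and>
     Comp C h f = Comp C k g"

definition indep_relation :: "('o, 'm) cat \<Rightarrow> ('m \<Rightarrow> 'm \<Rightarrow> 'm \<Rightarrow> 'm \<Rightarrow> bool) \<Rightarrow> bool" where
  "indep_relation C Ind \<longleftrightarrow> (\<forall>f g h k. Ind f g h k \<longrightarrow> comm_square C f g h k)"

definition invariance where
  "invariance C Ind \<longleftrightarrow> (\<forall>f g h k n. comm_square C f g h k \<and> n \<in> Mor C \<and> Dom C n = Cod C h \<longrightarrow>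
      (Ind f g h k \<longleftrightarrow> Ind f g (Comp C n h) (Comp C n k)))"

definition monotonicity where
  "monotonicity C Ind \<longleftrightarrow> (\<forall>f g h k g' b. Ind f g h k \<and> g' \<in> Mor C \<and> b \<in> Mor C \<and>
      Dom C g' = Dom C g \<and> Cod C g' = Dom C b \<and> Cod C b = Cod C g \<and> Comp C b g' = g \<longrightarrow>
      Ind f g' h (Comp C k b))"

definition transitivity where
  "transitivity C Ind \<longleftrightarrow> (\<forall>f g h k d m e. Ind f g h k \<and> Ind k d m e \<longrightarrow>
      Ind f (Comp C d g) (Comp C m h) e)"

definition symmetry where
  "symmetry C Ind \<longleftrightarrow> (\<forall>f g h k. Ind f g h k \<longleftrightarrow> Ind g f k h)"

definition existence where
  "existence C Ind \<longleftrightarrow> (\<forall>f\<in>Mor C. \<forall>g\<in>Mor C. Dom C f = Dom C g \<longrightarrow> (\<exists>h k. Ind f g h k))"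

text \<open>Base monotonicity: A \<perp>^M_C D via (f,d,h,k) with d = b2\<circ>b1 (b1: C\<rightarrow>B, b2: B\<rightarrow>D).\<close>
definition base_monotonicity where
  "base_monotonicity C Ind \<longleftrightarrow> (\<forall>f d h k b1 b2. Ind f d h k \<and> b1 \<in> Mor C \<and> b2 \<in> Mor C \<and>
      Dom C b1 = Dom C d \<and> Cod C b1 = Dom C b2 \<and> Cod C b2 = Cod C d \<and> Comp C b2 b1 = d \<longrightarrow>
      (\<exists>a b' a' n. a \<in> Mor C \<and> b' \<in> Mor C \<and> a' \<in> Mor C \<and> n \<in> Mor C \<and>
         Dom C a = Cod C f \<and> Dom C b' = Cod C b1 \<and> Cod C a = Cod C b' \<and> Dom C a' = Cod C a \<and>
         Dom C n = Cod C h \<and> Cod C n = Cod C a' \<and>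
         Comp C a f = Comp C b' b1 \<and> Comp C a' a = Comp C n h \<and>
         Comp C a' b' = Comp C n (Comp C k b2) \<and>
         Ind b' b2 a' (Comp C n k)))"

text \<open>Horn: a: M\<rightarrow>A, b: M\<rightarrow>B, c: M\<rightarrow>C, a1: A\<rightarrow>N1, b1: B\<rightarrow>N1, a2: A\<rightarrow>N2, c2: C\<rightarrow>N2,
  b3: B\<rightarrow>N3, c3: C\<rightarrow>N3.\<close>
definition indep_horn where
  "indep_horn Ind a b c a1 b1 a2 c2 b3 c3 \<longleftrightarrow>
     Ind a b a1 b1 \<and> Ind a c a2 c2 \<and> Ind b c b3 c3"

definition cube_commutes where
  "cube_commutes C a1 b1 a2 c2 b3 c3 n1 n2 n3 \<longleftrightarrow>
     n1 \<in> Mor C \<and> n2 \<in> Mor C \<and> n3 \<in> Mor C \<and>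
     Dom C n1 = Cod C a1 \<and> Dom C n2 = Cod C a2 \<and> Dom C n3 = Cod C b3 \<and>
     Cod C n1 = Cod C n2 \<and> Cod C n2 = Cod C n3 \<and>
     Comp C n1 a1 = Comp C n2 a2 \<and> Comp C n1 b1 = Comp C n3 b3 \<and> Comp C n2 c2 = Comp C n3 c3"

definition three_amalgamation where
  "three_amalgamation C Ind \<longleftrightarrow> (\<forall>a b c a1 b1 a2 c2 b3 c3.
     indep_horn Ind a b c a1 b1 a2 c2 b3 c3 \<longrightarrow>
     (\<exists>n1 n2 n3. cube_commutes C a1 b1 a2 c2 b3 c3 n1 n2 n3 \<and>
        Ind a (Comp C b3 b) (Comp C n1 a1) n3))"

definition strong_three_amalgamation where
  "strong_three_amalgamation C Ind \<longleftrightarrow> (\<forall>a b c a1 b1 a2 c2 b3 c3.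
     indep_horn Ind a b c a1 b1 a2 c2 b3 c3 \<longrightarrow>
     (\<exists>n1 n2 n3. cube_commutes C a1 b1 a2 c2 b3 c3 n1 n2 n3 \<and>
        Ind a b a1 b1 \<and> Ind a c a2 c2 \<and> Ind b c b3 c3 \<and>
        Ind a1 a2 n1 n2 \<and> Ind b1 b3 n1 n3 \<and> Ind c2 c3 n2 n3))"

end

theory Submission imports Defs begin

text \<open>By invariance, every independent square \<open>A \<perp>\<^sup>M\<^sub>C B\<close> may be shrunk so that its top is
  the join of \<open>A\<close> and \<open>B\<close> in \<open>M\<close>. For a horn of such squares, \<open>3\<close>-amalgamation provides a
  commuting cube with \<open>A \<perp>\<^sub>M N\<^sub>3\<close>. Each top face is then independent: its top object \<open>N\<^sub>i\<close> is
  generated by its two sides, so it embeds over the common base into the object supplied by base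
  monotonicity, and monotonicity restricts that independence to \<open>N\<^sub>i\<close>. The original horn is
  recovered by pasting, along the embeddings of the shrunken tops, independent squares provided by
  existence onto the cube; transitivity keeps the top faces independent.\<close>

lemma factors_through_Cod: "factors_through C m n \<Longrightarrow> Cod C m = Cod C n"
  unfolding factors_through_def by blast

locale mono_category =
  fixes C :: "('o, 'm) cat"
  assumes category: "category C" and all_mono: "all_mono C"
begin

lemma comp_in_Mor [simp]:
  "\<lbrakk>f \<in> Mor C; g \<in> Mor C; Cod C f = Dom C g\<rbrakk> \<Longrightarrow> Comp C g f \<in> Mor C"
  and Dom_comp [simp]:
  "\<lbrakk>f \<in> Mor C; g \<in> Mor C; Cod C f = Dom C g\<rbrakk> \<Longrightarrow> Dom C (Comp C g f) = Dom C f"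
  and Cod_comp [simp]:
  "\<lbrakk>f \<in> Mor C; g \<in> Mor C; Cod C f = Dom C g\<rbrakk> \<Longrightarrow> Cod C (Comp C g f) = Cod C g"
  using category unfolding category_def by blast+

lemma comp_assoc [simp]:
  "\<lbrakk>f \<in> Mor C; g \<in> Mor C; h \<in> Mor C; Cod C f = Dom C g; Cod C g = Dom C h\<rbrakk>
   \<Longrightarrow> Comp C (Comp C h g) f = Comp C h (Comp C g f)"
  using category unfolding category_def by metis

lemma Ident_Dom_in_Mor [simp]: "f \<in> Mor C \<Longrightarrow> Ident C (Dom C f) \<in> Mor C"
  and Dom_Ident_Dom [simp]: "f \<in> Mor C \<Longrightarrow> Dom C (Ident C (Dom C f)) = Dom C f"
  and Cod_Ident_Dom [simp]: "f \<in> Mor C \<Longrightarrow> Cod C (Ident C (Dom C f)) = Dom C f"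
  and comp_Ident_Dom [simp]: "f \<in> Mor C \<Longrightarrow> Comp C f (Ident C (Dom C f)) = f"
  using category unfolding category_def by blast+

lemma mono_of_Mor [intro]: "f \<in> Mor C \<Longrightarrow> mono C f"
  using all_mono unfolding all_mono_def by blast

lemma mono_Mor: "mono C f \<Longrightarrow> f \<in> Mor C"
  unfolding mono_def by blast

lemma cancel_left:
  "\<lbrakk>Comp C k f = Comp C k g; k \<in> Mor C; f \<in> Mor C; g \<in> Mor C; Dom C f = Dom C g;
    Cod C f = Dom C k; Cod C g = Dom C k\<rbrakk> \<Longrightarrow> f = g"
  using mono_of_Mor unfolding mono_def by metis

lemma factors_throughI [intro]:
  "\<lbrakk>Comp C n k = m; k \<in> Mor C; n \<in> Mor C; Cod C k = Dom C n\<rbrakk> \<Longrightarrow> factors_through C m n"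
  unfolding factors_through_def by auto

lemma factors_throughE [elim]:
  assumes "factors_through C m n"
  obtains k where "k \<in> Mor C" "Dom C k = Dom C m" "Cod C k = Dom C n" "Comp C n k = m"
  using assms unfolding factors_through_def by blast

lemma factors_through_postcomp:
  "\<lbrakk>factors_through C m k; j \<in> Mor C; k \<in> Mor C; Cod C k = Dom C j\<rbrakk>
   \<Longrightarrow> factors_through C (Comp C j m) (Comp C j k)"
  by (elim factors_throughE) (metis comp_assoc comp_in_Mor Cod_comp Dom_comp factors_throughI)

lemma factors_through_trans:
  "\<lbrakk>factors_through C m n; factors_through C n p; p \<in> Mor C\<rbrakk> \<Longrightarrow> factors_through C m p"
  by (elim factors_throughE) (metis comp_assoc comp_in_Mor Cod_comp factors_throughI)

end

definition subobject_join :: "('o, 'm) cat \<Rightarrow> 'm \<Rightarrow> 'm \<Rightarrow> 'm \<Rightarrow> bool" where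
  "subobject_join C m1 m2 j \<longleftrightarrow> mono C j \<and> factors_through C m1 j \<and> factors_through C m2 j \<and>
     (\<forall>n. mono C n \<and> factors_through C m1 n \<and> factors_through C m2 n \<longrightarrow> factors_through C j n)"

text \<open>The identity factoring through the mono \<open>k\<close> makes \<open>k\<close> an isomorphism, so \<open>generates C f g\<close>
  says that no proper subobject of \<open>Cod C f\<close> contains both \<open>f\<close> and \<open>g\<close>.\<close>
definition generates :: "('o, 'm) cat \<Rightarrow> 'm \<Rightarrow> 'm \<Rightarrow> bool" where
  "generates C f g \<longleftrightarrow> (\<forall>k. mono C k \<and> factors_through C f k \<and> factors_through C g k
     \<longrightarrow> factors_through C (Ident C (Cod C f)) k)"

lemma generates_commute: "\<lbrakk>generates C f g; Cod C f = Cod C g\<rbrakk> \<Longrightarrow> generates C g f"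
  unfolding generates_def by auto

locale subobject_joins = mono_category +
  assumes joins: "has_binary_joins C"
begin

lemma subobject_join_exists:
  assumes "m1 \<in> Mor C" "m2 \<in> Mor C" "Cod C m1 = Cod C m2"
  obtains j where "subobject_join C m1 m2 j"
proof -
  have "mono C m1 \<and> mono C m2 \<and> Cod C m1 = Cod C m2" using assms by auto
  then obtain j where "mono C j" "factors_through C m1 j" "factors_through C m2 j"
    "\<forall>n. mono C n \<and> Cod C n = Cod C m1 \<and> factors_through C m1 n \<and> factors_through C m2 n
       \<longrightarrow> factors_through C j n"
    using joins unfolding has_binary_joins_def by meson
  then have "subobject_join C m1 m2 j"
    unfolding subobject_join_def using factors_through_Cod by metis
  then show ?thesis by (rule that)
qed

lemma join_factors_generate:
  assumes join: "subobject_join C m1 m2 j"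
    and m1': "m1' \<in> Mor C" "Cod C m1' = Dom C j" "Comp C j m1' = m1"
    and m2': "m2' \<in> Mor C" "Cod C m2' = Dom C j" "Comp C j m2' = m2"
  shows "generates C m1' m2'"
  unfolding generates_def
proof (intro allI impI, elim conjE)
  fix k assume k: "mono C k" "factors_through C m1' k" "factors_through C m2' k"
  have j: "j \<in> Mor C" "mono C j" using join mono_Mor unfolding subobject_join_def by blast+
  have kM: "k \<in> Mor C" and Cod_k: "Cod C k = Dom C j"
    using k m1' mono_Mor unfolding factors_through_def by auto
  have "factors_through C m1 (Comp C j k)" "factors_through C m2 (Comp C j k)"
    using factors_through_postcomp k(2,3) m1' m2' j kM Cod_k by auto
  moreover have "mono C (Comp C j k)" using j kM Cod_k by auto
  ultimately have "factors_through C j (Comp C j k)"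
    using join unfolding subobject_join_def by blast
  then obtain s where s: "s \<in> Mor C" "Dom C s = Dom C j" "Cod C s = Dom C (Comp C j k)"
    "Comp C (Comp C j k) s = j"
    by (elim factors_throughE)
  have "Comp C j (Comp C k s) = Comp C j (Ident C (Dom C j))"
    using s j kM Cod_k by simp
  then have "Comp C k s = Ident C (Dom C j)"
    by (rule cancel_left) (use s j kM Cod_k in auto)
  then show "factors_through C (Ident C (Cod C m1')) k"
    using s kM Cod_k j m1' by (intro factors_throughI[where k = s]) auto
qed

lemma generates_join_factors:
  assumes gen: "generates C f g" and join: "subobject_join C (Comp C m f) (Comp C m g) j"
    and m: "m \<in> Mor C" and f: "f \<in> Mor C" "Cod C f = Dom C m" and g: "g \<in> Mor C" "Cod C g = Dom C m"
  shows "factors_through C m j"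
proof -
  have j: "j \<in> Mor C" using join mono_Mor unfolding subobject_join_def by blast
  have "factors_through C j m"
    using join m f g unfolding subobject_join_def by auto
  then obtain k where k: "k \<in> Mor C" "Dom C k = Dom C j" "Cod C k = Dom C m" "Comp C m k = j"
    by (elim factors_throughE)
  have below_k: "factors_through C h k" if h: "h \<in> Mor C" "Cod C h = Dom C m"
    and "factors_through C (Comp C m h) j" for h
  proof -
    from \<open>factors_through C (Comp C m h) j\<close> obtain x where
      x: "x \<in> Mor C" "Dom C x = Dom C (Comp C m h)" "Cod C x = Dom C j" "Comp C j x = Comp C m h"
      by (elim factors_throughE)
    have "Comp C m (Comp C k x) = Comp C m h" using x k m by (metis comp_assoc)
    then have "Comp C k x = h"
      by (rule cancel_left) (use x k h m in auto)
    then show ?thesis using x k by (intro factors_throughI[where k = x]) auto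
  qed
  have "factors_through C f k" "factors_through C g k"
    using below_k f g join unfolding subobject_join_def by auto
  then have "factors_through C (Ident C (Dom C m)) k"
    using gen k f unfolding generates_def by auto
  then obtain s where s: "s \<in> Mor C" "Dom C s = Dom C (Ident C (Dom C m))" "Cod C s = Dom C k"
    "Comp C k s = Ident C (Dom C m)"
    by (elim factors_throughE)
  have "Comp C j s = m" using s k m by (metis comp_assoc comp_Ident_Dom)
  then show ?thesis using s j k m by (intro factors_throughI[where k = s]) auto
qed

lemma generated_factors_through:
  assumes gen: "generates C f g" and m: "m \<in> Mor C"
    and f: "f \<in> Mor C" "Cod C f = Dom C m" and g: "g \<in> Mor C" "Cod C g = Dom C m"
    and a: "a \<in> Mor C" "factors_through C (Comp C m f) a" "factors_through C (Comp C m g) a"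
  shows "factors_through C m a"
proof -
  obtain j where join: "subobject_join C (Comp C m f) (Comp C m g) j"
    using subobject_join_exists[of "Comp C m f" "Comp C m g"] m f g by auto
  then have "factors_through C j a"
    using a unfolding subobject_join_def by blast
  moreover have "factors_through C m j"
    using generates_join_factors[OF gen join m f g] .
  ultimately show ?thesis
    using factors_through_trans a(1) by blast
qed

end

locale independence = subobject_joins C for C :: "('o, 'm) cat" +
  fixes Ind :: "'m \<Rightarrow> 'm \<Rightarrow> 'm \<Rightarrow> 'm \<Rightarrow> bool"
  assumes indep_relation: "indep_relation C Ind"
    and invariance: "invariance C Ind"
    and symmetry: "symmetry C Ind"
begin

lemma indep_comm_square: "Ind f g h k \<Longrightarrow> comm_square C f g h k"
  using indep_relation unfolding indep_relation_def by blast

lemma indep_sym: "Ind f g h k \<Longrightarrow> Ind g f k h"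
  using symmetry unfolding symmetry_def by blast

lemma indep_postcomp:
  "\<lbrakk>Ind f g h k; n \<in> Mor C; Dom C n = Cod C h\<rbrakk> \<Longrightarrow> Ind f g (Comp C n h) (Comp C n k)"
  using invariance indep_comm_square unfolding invariance_def by blast

lemma indep_cancel_postcomp:
  "\<lbrakk>Ind f g (Comp C n h) (Comp C n k); comm_square C f g h k; n \<in> Mor C; Dom C n = Cod C h\<rbrakk>
   \<Longrightarrow> Ind f g h k"
  using invariance unfolding invariance_def by blast

lemma indep_trans:
  "\<lbrakk>transitivity C Ind; Ind f g h k; Ind k d m e\<rbrakk> \<Longrightarrow> Ind f (Comp C d g) (Comp C m h) e"
  unfolding transitivity_def by blast

lemma indep_restrict:
  "\<lbrakk>monotonicity C Ind; Ind f (Comp C b g) h k; g \<in> Mor C; b \<in> Mor C; Cod C g = Dom C b\<rbrakk>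
   \<Longrightarrow> Ind f g h (Comp C k b)"
  unfolding monotonicity_def by auto

lemma indep_through_generating_pair:
  assumes I: "Ind a b a1 b1"
  obtains j a1' b1' where "j \<in> Mor C" "a1' \<in> Mor C" "b1' \<in> Mor C"
    "Cod C a1' = Dom C j" "Cod C b1' = Dom C j" "Comp C j a1' = a1" "Comp C j b1' = b1"
    "Ind a b a1' b1'" "generates C a1' b1'"
proof -
  have a: "a \<in> Mor C" "Cod C a = Dom C a1" and b: "b \<in> Mor C" "Cod C b = Dom C b1"
    and a1: "a1 \<in> Mor C" and b1: "b1 \<in> Mor C" and "Dom C a = Dom C b"
    and "Cod C a1 = Cod C b1" and sq: "Comp C a1 a = Comp C b1 b"
    using indep_comm_square[OF I] unfolding comm_square_def by auto
  then obtain j where join: "subobject_join C a1 b1 j"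
    using subobject_join_exists by blast
  then have j: "j \<in> Mor C" using mono_Mor unfolding subobject_join_def by blast
  obtain a1' where a1': "a1' \<in> Mor C" "Dom C a1' = Dom C a1" "Cod C a1' = Dom C j" "Comp C j a1' = a1"
    using join unfolding subobject_join_def by blast
  obtain b1' where b1': "b1' \<in> Mor C" "Dom C b1' = Dom C b1" "Cod C b1' = Dom C j" "Comp C j b1' = b1"
    using join unfolding subobject_join_def by blast
  have "Comp C j (Comp C a1' a) = Comp C j (Comp C b1' b)"
    using sq a b a1' b1' j by (metis comp_assoc)
  then have "Comp C a1' a = Comp C b1' b"
    by (rule cancel_left) (use a b a1' b1' j \<open>Dom C a = Dom C b\<close> in auto)
  then have "comm_square C a b a1' b1'"
    using a b a1' b1' \<open>Dom C a = Dom C b\<close> unfolding comm_square_def by auto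
  then have "Ind a b a1' b1'"
    using indep_cancel_postcomp I a1' b1' j by auto
  moreover have "generates C a1' b1'"
    using join_factors_generate join a1' b1' by blast
  ultimately show ?thesis using that j a1' b1' by blast
qed

text \<open>Here \<open>A \<perp>\<^sup>M\<^sub>C D\<close> with \<open>x : C \<rightarrow> A\<close>, \<open>y : C \<rightarrow> B\<close>, \<open>q : B \<rightarrow> D\<close>,
  and \<open>z : Z \<rightarrow> M\<close> is the subobject generated by \<open>A\<close> and \<open>B\<close>. Base monotonicity yields
  \<open>A' \<perp>\<^sub>B D\<close> with \<open>A, B \<le> A'\<close>; being generated by \<open>A\<close> and \<open>B\<close>, \<open>Z\<close> lies below every
  such upper bound, so it embeds into \<open>A'\<close> over \<open>B\<close>.\<close>
lemma generated_embeds_over_base: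
  assumes base_monotonicity: "base_monotonicity C Ind"
    and I: "Ind x (Comp C q y) h k" and y: "y \<in> Mor C" and q: "q \<in> Mor C" "Cod C y = Dom C q"
    and z: "z \<in> Mor C"
    and zx: "zx \<in> Mor C" "Cod C zx = Dom C z" "Comp C z zx = h"
    and zy: "zy \<in> Mor C" "Cod C zy = Dom C z" "Comp C z zy = Comp C k q"
    and gen: "generates C zx zy"
  obtains t a' n where "t \<in> Mor C" "Dom C t = Dom C z" "a' \<in> Mor C" "Cod C t = Dom C a'"
    "n \<in> Mor C" "Dom C n = Cod C z" "Comp C a' t = Comp C n z" "Ind (Comp C t zy) q a' (Comp C n k)"
proof -
  have h: "h \<in> Mor C" "Cod C h = Cod C z" and k: "k \<in> Mor C" "Cod C q = Dom C k"
    using indep_comm_square[OF I] zx z q y unfolding comm_square_def by auto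
  obtain \<alpha> \<beta> a' n where \<alpha>: "\<alpha> \<in> Mor C" and \<beta>: "\<beta> \<in> Mor C" and a': "a' \<in> Mor C" and n: "n \<in> Mor C"
    and "Dom C \<alpha> = Cod C x" and Dom_\<beta>: "Dom C \<beta> = Cod C y" and Cod_\<alpha>\<beta>: "Cod C \<alpha> = Cod C \<beta>"
    and Dom_a': "Dom C a' = Cod C \<alpha>" and Dom_n: "Dom C n = Cod C h" and "Cod C n = Cod C a'"
    and "Comp C \<alpha> x = Comp C \<beta> y" and \<alpha>_comm: "Comp C a' \<alpha> = Comp C n h"
    and \<beta>_comm: "Comp C a' \<beta> = Comp C n (Comp C k q)" and J: "Ind \<beta> q a' (Comp C n k)"
    using base_monotonicity[unfolded base_monotonicity_def, rule_format, of x "Comp C q y" h k y q]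
      I y q by auto
  have "factors_through C (Comp C (Comp C n z) zx) a'" "factors_through C (Comp C (Comp C n z) zy) a'"
    using \<alpha> \<beta> a' Dom_a' Cod_\<alpha>\<beta> \<alpha>_comm \<beta>_comm zx zy z n h Dom_n
    by (intro factors_throughI[where k = \<alpha>] factors_throughI[where k = \<beta>]; simp)+
  then have "factors_through C (Comp C n z) a'"
    using generated_factors_through[OF gen] a' n h z zx zy Dom_n by simp
  then obtain t where t: "t \<in> Mor C" "Dom C t = Dom C (Comp C n z)" "Cod C t = Dom C a'"
    "Comp C a' t = Comp C n z"
    by (elim factors_throughE)
  have Dom_zy: "Dom C zy = Dom C q"
    using zy z k q by (metis Dom_comp)
  have "Comp C a' (Comp C t zy) = Comp C (Comp C a' t) zy"
    using t(1-3) zy z n h Dom_n a' by simp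
  also have "\<dots> = Comp C a' \<beta>"
    unfolding t(4) using zy z n h Dom_n \<beta>_comm by simp
  finally have "Comp C t zy = \<beta>"
    by (rule cancel_left) (use t zy z n h Dom_n Dom_zy a' \<beta> Dom_\<beta> q Dom_a' Cod_\<alpha>\<beta> in simp_all)
  then show ?thesis
    using that[of t a' n] t a' n h z Dom_n J by simp
qed

lemma indep_generated_over_base:
  assumes base_monotonicity: "base_monotonicity C Ind" and monotonicity: "monotonicity C Ind"
    and I: "Ind x (Comp C q y) h k" and y: "y \<in> Mor C" and q: "q \<in> Mor C" "Cod C y = Dom C q"
    and z: "z \<in> Mor C"
    and zx: "zx \<in> Mor C" "Cod C zx = Dom C z" "Comp C z zx = h"
    and zy: "zy \<in> Mor C" "Cod C zy = Dom C z" "Comp C z zy = Comp C k q"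
    and gen: "generates C zx zy"
  shows "Ind zy q z k"
proof -
  obtain t a' n where t: "t \<in> Mor C" "Dom C t = Dom C z" "Cod C t = Dom C a'" and a': "a' \<in> Mor C"
    and n: "n \<in> Mor C" "Dom C n = Cod C z" and embed: "Comp C a' t = Comp C n z"
    and J: "Ind (Comp C t zy) q a' (Comp C n k)"
    using generated_embeds_over_base[OF base_monotonicity I y q z zx zy gen] by metis
  have k: "k \<in> Mor C" "Cod C q = Dom C k" "Cod C k = Cod C z"
    using indep_comm_square[OF I] zx z q y unfolding comm_square_def by auto
  have "Ind q zy (Comp C n k) (Comp C n z)"
    using indep_restrict[OF monotonicity indep_sym[OF J]] t zy embed by simp
  moreover have "Dom C zy = Dom C q"
    using zy z k q by (metis Dom_comp)
  then have "comm_square C q zy k z"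
    using q zy z k by (simp add: comm_square_def)
  ultimately have "Ind q zy k z"
    by (rule indep_cancel_postcomp) (use n k in simp_all)
  then show ?thesis by (rule indep_sym)
qed

end

definition indep_top_faces ::
  "('o, 'm) cat \<Rightarrow> ('m \<Rightarrow> 'm \<Rightarrow> 'm \<Rightarrow> 'm \<Rightarrow> bool) \<Rightarrow>
    'm \<Rightarrow> 'm \<Rightarrow> 'm \<Rightarrow> 'm \<Rightarrow> 'm \<Rightarrow> 'm \<Rightarrow> 'm \<Rightarrow> 'm \<Rightarrow> 'm \<Rightarrow> bool" where
  "indep_top_faces C Ind a1 b1 a2 c2 b3 c3 n1 n2 n3 \<longleftrightarrow>
     cube_commutes C a1 b1 a2 c2 b3 c3 n1 n2 n3 \<and>
     Ind a1 a2 n1 n2 \<and> Ind b1 b3 n1 n3 \<and> Ind c2 c3 n2 n3"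

context independence
begin

lemma indep_top_faces_swap:
  "indep_top_faces C Ind a1 b1 a2 c2 b3 c3 n1 n2 n3 \<Longrightarrow> indep_top_faces C Ind a2 c2 a1 b1 c3 b3 n2 n1 n3"
  unfolding indep_top_faces_def cube_commutes_def
  using indep_sym indep_comm_square unfolding comm_square_def by metis

lemma generated_horn_amalgamation:
  assumes base_monotonicity: "base_monotonicity C Ind" and monotonicity: "monotonicity C Ind"
    and transitivity: "transitivity C Ind" and three_amalgamation: "three_amalgamation C Ind"
    and AB: "Ind a b a1 b1" and AC: "Ind a c a2 c2" and BC: "Ind b c b3 c3"
    and gen1: "generates C a1 b1" and gen2: "generates C a2 c2"
  obtains m1 m2 m3 where "indep_top_faces C Ind a1 b1 a2 c2 b3 c3 m1 m2 m3"
proof -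
  obtain m1 m2 m3 where cube: "cube_commutes C a1 b1 a2 c2 b3 c3 m1 m2 m3"
    and I: "Ind a (Comp C b3 b) (Comp C m1 a1) m3"
    using three_amalgamation AB AC BC unfolding three_amalgamation_def indep_horn_def by blast
  note sq = indep_comm_square[OF AB, unfolded comm_square_def]
    indep_comm_square[OF AC, unfolded comm_square_def]
    indep_comm_square[OF BC, unfolded comm_square_def]
    cube[unfolded cube_commutes_def]
  have face_B: "Ind b1 b3 m1 m3"
    by (rule indep_generated_over_base[OF base_monotonicity monotonicity I, where zx = a1])
      (use sq gen1 in auto)
  have "Ind a (Comp C c3 c) (Comp C m1 a1) m3"
    using I sq by simp
  then have face_C: "Ind c2 c3 m2 m3"
    by (rule indep_generated_over_base[OF base_monotonicity monotonicity, where zx = a2])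
      (use sq gen2 in auto)
  have "Ind b (Comp C c2 c) (Comp C m3 b3) m2"
    using indep_trans[OF transitivity BC indep_sym[OF face_C]] .
  then have "Ind b (Comp C a2 a) (Comp C m3 b3) m2"
    using sq by simp
  then have face_A: "Ind a1 a2 m1 m2"
    by (rule indep_generated_over_base[OF base_monotonicity monotonicity, where zx = b1])
      (use sq generates_commute[OF gen1] in auto)
  show ?thesis using that cube face_A face_B face_C unfolding indep_top_faces_def by blast
qed

text \<open>Enlarging the first top vertex along \<open>j\<close>: paste an independent square on \<open>m1\<close> and \<open>j\<close>.\<close>
lemma indep_top_faces_extend:
  assumes existence: "existence C Ind" and transitivity: "transitivity C Ind"
    and top: "indep_top_faces C Ind a1 b1 a2 c2 b3 c3 m1 m2 m3"
    and j: "j \<in> Mor C" "Dom C j = Cod C a1"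
  obtains n1 n2 n3 where "indep_top_faces C Ind (Comp C j a1) (Comp C j b1) a2 c2 b3 c3 n1 n2 n3"
proof -
  have cube: "cube_commutes C a1 b1 a2 c2 b3 c3 m1 m2 m3" and face_A: "Ind a1 a2 m1 m2"
    and face_B: "Ind b1 b3 m1 m3" and face_C: "Ind c2 c3 m2 m3"
    using top unfolding indep_top_faces_def by blast+
  have m1: "m1 \<in> Mor C" "Dom C m1 = Cod C a1"
    using indep_comm_square[OF face_A] unfolding comm_square_def by auto
  obtain r e where E: "Ind m1 j r e"
    using existence m1 j unfolding existence_def by metis
  have r: "r \<in> Mor C" "Dom C r = Cod C m1" and e: "e \<in> Mor C" "Dom C e = Cod C j" "Cod C e = Cod C r"
    and E_comm: "Comp C r m1 = Comp C e j"
    using indep_comm_square[OF E] unfolding comm_square_def by auto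
  have pasting: "Comp C e (Comp C j w) = Comp C r (Comp C m1 w)"
    if w: "w \<in> Mor C" "Cod C w = Cod C a1" for w
  proof -
    have "Comp C e (Comp C j w) = Comp C (Comp C e j) w" using w j e by simp
    also have "\<dots> = Comp C (Comp C r m1) w" using E_comm by simp
    also have "\<dots> = Comp C r (Comp C m1 w)" using w r m1 by simp
    finally show ?thesis .
  qed
  have "Ind a2 (Comp C j a1) (Comp C r m2) e" "Ind b3 (Comp C j b1) (Comp C r m3) e"
    using indep_trans[OF transitivity indep_sym E] face_A face_B by blast+
  moreover have "Ind c2 c3 (Comp C r m2) (Comp C r m3)"
    using indep_postcomp[OF face_C] r indep_comm_square[OF face_A] unfolding comm_square_def by simp
  moreover have "cube_commutes C (Comp C j a1) (Comp C j b1) a2 c2 b3 c3 e (Comp C r m2) (Comp C r m3)"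
    using indep_comm_square[OF face_A] indep_comm_square[OF face_B] indep_comm_square[OF face_C]
      r e j cube pasting[of a1] pasting[of b1]
    unfolding cube_commutes_def comm_square_def by auto
  ultimately show ?thesis
    using that[of e "Comp C r m2" "Comp C r m3"] indep_sym unfolding indep_top_faces_def by blast
qed

end

theorem theorem6p2:
  fixes C :: "('o, 'm) cat" and Ind :: "'m \<Rightarrow> 'm \<Rightarrow> 'm \<Rightarrow> 'm \<Rightarrow> bool"
  assumes "category C"
    and "all_mono C"
    and "has_binary_joins C"
    and "indep_relation C Ind"
    and "invariance C Ind"
    and monotonicity: "monotonicity C Ind"
    and transitivity: "transitivity C Ind"
    and "symmetry C Ind"
    and existence: "existence C Ind"
    and base_monotonicity: "base_monotonicity C Ind"
    and three_amalgamation: "three_amalgamation C Ind"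
  shows "strong_three_amalgamation C Ind"
  unfolding strong_three_amalgamation_def indep_horn_def
proof (intro allI impI, elim conjE)
  interpret independence C Ind using assms by unfold_locales
  fix a b c a1 b1 a2 c2 b3 c3
  assume AB: "Ind a b a1 b1" and AC: "Ind a c a2 c2" and BC: "Ind b c b3 c3"
  obtain j1 a1' b1' where j1: "j1 \<in> Mor C" "Cod C a1' = Dom C j1" "Comp C j1 a1' = a1" "Comp C j1 b1' = b1"
    and AB': "Ind a b a1' b1'" and gen1: "generates C a1' b1'"
    using indep_through_generating_pair[OF AB] by metis
  obtain j2 a2' c2' where j2: "j2 \<in> Mor C" "Cod C a2' = Dom C j2" "Comp C j2 a2' = a2" "Comp C j2 c2' = c2"
    and AC': "Ind a c a2' c2'" and gen2: "generates C a2' c2'"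
    using indep_through_generating_pair[OF AC] by metis
  obtain m1 m2 m3 where "indep_top_faces C Ind a1' b1' a2' c2' b3 c3 m1 m2 m3"
    using generated_horn_amalgamation[OF base_monotonicity monotonicity transitivity three_amalgamation AB' AC' BC gen1 gen2] .
  then obtain m1' m2' m3' where "indep_top_faces C Ind a2' c2' a1 b1 c3 b3 m2' m1' m3'"
    using indep_top_faces_extend[OF existence transitivity _ j1(1)] indep_top_faces_swap j1 by metis
  then obtain n2 n1 n3 where "indep_top_faces C Ind a2 c2 a1 b1 c3 b3 n2 n1 n3"
    using indep_top_faces_extend[OF existence transitivity _ j2(1)] j2 by metis
  then show "\<exists>n1 n2 n3. cube_commutes C a1 b1 a2 c2 b3 c3 n1 n2 n3 \<and> Ind a b a1 b1 \<and> Ind a c a2 c2 \<and>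
      Ind b c b3 c3 \<and> Ind a1 a2 n1 n2 \<and> Ind b1 b3 n1 n3 \<and> Ind c2 c3 n2 n3"
    using indep_top_faces_swap AB AC BC unfolding indep_top_faces_def by blast
qed

end
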